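(* Let $B$ be a Banach algebra such that $\bigcap_{\varphi\in\Delta(B)}\ker\varphi=\{0\}$, let $A$ be a Banach subalgebra of $B$, and let $D:A\to B$ be a bounded linear operator. Then the following are equivalent: (i) $D$ is a derivation, i.e. $D(ab)=a\,D(b)+D(a)\,b$ for all $a,b\in A$; (ii) for every $\varphi\in\Delta(B)$, the functional $\varphi\circ D$ is a $(\varphi,\iota)$-point derivation on $A$, where $\iota:A\to B$ is the inclusion map; that is, $\varphi(D(ab))=\varphi(a)\,\varphi(D(b))+\varphi(b)\,\varphi(D(a))$ for all $a,b\in A$.
   Context: $\Delta(B)$ denotes the set of all nonzero multiplicative linear functionals on $B$. The paper calls $B$ semisimple when $\bigcap_{\varphi\in\Delta(B)}\ker\varphi=\{0\}$ (this is the sense used here). For $\varphi\in\Delta(B)$ and a continuous homomorphism $\psi:A\to B$, a bounded linear functional $T$ on $A$ is a $(\varphi,\psi)$-point derivation if $T(ab)=\varphi(\psi(a))T(b)+\varphi(\psi(b))T(a)$ for all $a,b\in A$. *)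

theory Defs
  imports "HOL-Analysis.Analysis"
begin

class complex_banach_algebra = real_normed_algebra + banach +
  fixes scaleC :: "complex \<Rightarrow> 'a \<Rightarrow> 'a"
  assumes scaleC_add_right: "scaleC c (x + y) = scaleC c x + scaleC c y"
    and scaleC_add_left: "scaleC (c + d) x = scaleC c x + scaleC d x"
    and scaleC_scaleC: "scaleC c (scaleC d x) = scaleC (c * d) x"
    and scaleC_one: "scaleC 1 x = x"
    and scaleR_scaleC: "scaleR r x = scaleC (of_real r) x"
    and norm_scaleC: "norm (scaleC c x) = cmod c * norm x"
    and scaleC_mult_left: "scaleC c (x * y) = scaleC c x * y"
    and scaleC_mult_right: "scaleC c (x * y) = x * scaleC c y"

definition Delta :: "('b::complex_banach_algebra \<Rightarrow> complex) set" where
  "Delta = {\<phi>. (\<forall>x y. \<phi> (x + y) = \<phi> x + \<phi> y)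
             \<and> (\<forall>c x. \<phi> (scaleC c x) = c * \<phi> x)
             \<and> (\<forall>x y. \<phi> (x * y) = \<phi> x * \<phi> y)
             \<and> (\<exists>x. \<phi> x \<noteq> 0)}"

definition semisimple :: "'b::complex_banach_algebra itself \<Rightarrow> bool" where
  "semisimple _ \<longleftrightarrow> (\<Inter>\<phi>\<in>(Delta :: ('b \<Rightarrow> complex) set). {x. \<phi> x = 0}) = {0}"

definition banach_subalgebra :: "'b::complex_banach_algebra set \<Rightarrow> bool" where
  "banach_subalgebra A \<longleftrightarrow> 0 \<in> A
     \<and> (\<forall>a\<in>A. \<forall>b\<in>A. a + b \<in> A)
     \<and> (\<forall>c. \<forall>a\<in>A. scaleC c a \<in> A)
     \<and> (\<forall>a\<in>A. \<forall>b\<in>A. a * b \<in> A)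
     \<and> closed A"

definition bounded_linear_on ::
  "'a::complex_banach_algebra set \<Rightarrow> ('a \<Rightarrow> 'b::complex_banach_algebra) \<Rightarrow> bool" where
  "bounded_linear_on A D \<longleftrightarrow>
     (\<forall>a\<in>A. \<forall>b\<in>A. D (a + b) = D a + D b)
     \<and> (\<forall>c. \<forall>a\<in>A. D (scaleC c a) = scaleC c (D a))
     \<and> (\<exists>K. \<forall>a\<in>A. norm (D a) \<le> K * norm a)"

definition bounded_linear_functional_on ::
  "'a::complex_banach_algebra set \<Rightarrow> ('a \<Rightarrow> complex) \<Rightarrow> bool" where
  "bounded_linear_functional_on A T \<longleftrightarrow>
     (\<forall>a\<in>A. \<forall>b\<in>A. T (a + b) = T a + T b)
     \<and> (\<forall>c. \<forall>a\<in>A. T (scaleC c a) = c * T a)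
     \<and> (\<exists>K. \<forall>a\<in>A. cmod (T a) \<le> K * norm a)"

definition point_derivation ::
  "'a::complex_banach_algebra set \<Rightarrow> ('b::complex_banach_algebra \<Rightarrow> complex)
     \<Rightarrow> ('a \<Rightarrow> 'b) \<Rightarrow> ('a \<Rightarrow> complex) \<Rightarrow> bool" where
  "point_derivation A \<phi> \<psi> T \<longleftrightarrow> bounded_linear_functional_on A T
     \<and> (\<forall>a\<in>A. \<forall>b\<in>A. T (a * b) = \<phi> (\<psi> a) * T b + \<phi> (\<psi> b) * T a)"

end

theory Submission
  imports Defs
begin

text \<open>Every character \<open>\<phi>\<close> of a Banach algebra satisfies \<open>\<bar>\<phi> x\<bar> \<le> \<parallel>x\<parallel>\<close>: otherwise
  some \<open>y\<close> with \<open>\<parallel>y\<parallel> < 1\<close> has \<open>\<phi> y = 1\<close>, and applying \<open>\<phi>\<close> to the quasi-inverse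
  relation \<open>z = y + y z\<close> given by the Neumann series gives \<open>\<phi> z = 1 + \<phi> z\<close>. Hence
  \<open>\<phi> \<circ> D\<close> is bounded, and a character maps the derivation identity to the point
  derivation identity. Conversely, if every character sees the point derivation
  identity, the defect \<open>D(ab) - a D(b) - D(a) b\<close> lies in every character kernel and
  so vanishes by semisimplicity.\<close>

lemma quasi_inverse_exists:
  fixes y :: "'a::{real_normed_algebra,banach}"
  assumes "norm y < 1"
  obtains z where "z = y + y * z"
proof -
  \<comment> \<open>\<open>f n = y^(n+1)\<close>, written by iteration because the algebra need not have a unit\<close>
  define f where "f n = (((*) y) ^^ n) y" for n
  have f_bound: "norm (f n) \<le> norm y ^ Suc n" for n
  proof (induction n)
    case 0
    then show ?case by (simp add: f_def)
  next
    case (Suc n)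
    have "norm (f (Suc n)) = norm (y * f n)" by (simp add: f_def)
    also have "\<dots> \<le> norm y * norm (f n)" by (rule norm_mult_ineq)
    also have "\<dots> \<le> norm y * norm y ^ Suc n" using Suc by (simp add: mult_left_mono)
    finally show ?case by simp
  qed
  have "summable (\<lambda>n. norm y ^ Suc n)"
    using assms by (simp add: summable_geometric summable_mult)
  then have f_summable: "summable f"
    by (rule summable_comparison_test[rotated]) (use f_bound in auto)
  define z where "z = suminf f"
  have "y * z = (\<Sum>n. y * f n)"
    unfolding z_def using bounded_linear.suminf[OF bounded_linear_mult_right f_summable] by simp
  also have "\<dots> = (\<Sum>n. f (Suc n))" by (simp add: f_def)
  also have "\<dots> = z - f 0" unfolding z_def by (rule suminf_split_head[OF f_summable])
  finally have "z = y + y * z" by (simp add: f_def algebra_simps)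
  then show ?thesis by (rule that)
qed

lemma DeltaD:
  assumes "\<phi> \<in> Delta"
  shows "\<phi> (x + y) = \<phi> x + \<phi> y" and "\<phi> (scaleC c x) = c * \<phi> x" and "\<phi> (x * y) = \<phi> x * \<phi> y"
  using assms unfolding Delta_def by blast+

lemma Delta_diff:
  assumes "\<phi> \<in> Delta"
  shows "\<phi> (x - y) = \<phi> x - \<phi> y"
  using DeltaD(1)[OF assms, of "x - y" y] by simp

lemma Delta_norm_le:
  fixes \<phi> :: "'b::complex_banach_algebra \<Rightarrow> complex"
  assumes \<phi>: "\<phi> \<in> Delta"
  shows "cmod (\<phi> x) \<le> norm x"
proof (rule ccontr)
  assume "\<not> cmod (\<phi> x) \<le> norm x"
  then have less: "norm x < cmod (\<phi> x)" by simp
  then have nonzero: "\<phi> x \<noteq> 0" by (metis norm_ge_zero norm_zero not_less)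
  define y where "y = scaleC (1 / \<phi> x) x"
  have "\<phi> y = 1" using nonzero unfolding y_def DeltaD(2)[OF \<phi>] by simp
  moreover have "norm y < 1"
    unfolding y_def norm_scaleC using less nonzero by (simp add: norm_divide divide_simps)
  then obtain z where "z = y + y * z" by (rule quasi_inverse_exists)
  then have "\<phi> z = \<phi> y + \<phi> y * \<phi> z" using DeltaD[OF \<phi>] by metis
  ultimately show False by simp
qed

lemma bounded_linear_functional_on_Delta_comp:
  assumes \<phi>: "\<phi> \<in> Delta" and D: "bounded_linear_on A D"
  shows "bounded_linear_functional_on A (\<phi> \<circ> D)"
proof -
  from D obtain K where K: "\<forall>a\<in>A. norm (D a) \<le> K * norm a"
    unfolding bounded_linear_on_def by blast
  have "\<forall>a\<in>A. cmod ((\<phi> \<circ> D) a) \<le> K * norm a"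
    using K Delta_norm_le[OF \<phi>] order_trans by fastforce
  then show ?thesis
    using D DeltaD[OF \<phi>] unfolding bounded_linear_functional_on_def bounded_linear_on_def by auto
qed

lemma semisimple_Delta_eqI:
  fixes x y :: "'b::complex_banach_algebra"
  assumes "semisimple TYPE('b)" and "\<And>\<phi>. \<phi> \<in> Delta \<Longrightarrow> \<phi> x = \<phi> y"
  shows "x = y"
proof -
  have "x - y \<in> (\<Inter>\<phi>\<in>(Delta :: ('b \<Rightarrow> complex) set). {x. \<phi> x = 0})"
    using assms(2) Delta_diff by fastforce
  then show ?thesis using assms(1) unfolding semisimple_def by simp
qed

theorem theorem2p9:
  fixes A :: "'b::complex_banach_algebra set" and D :: "'b \<Rightarrow> 'b"
  assumes "semisimple TYPE('b)"
    and "banach_subalgebra A"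
    and "bounded_linear_on A D"
  shows "(\<forall>a\<in>A. \<forall>b\<in>A. D (a * b) = a * D b + D a * b)
     \<longleftrightarrow> (\<forall>\<phi>\<in>Delta. point_derivation A \<phi> (\<lambda>a. a) (\<phi> \<circ> D))"
proof
  assume derivation: "\<forall>a\<in>A. \<forall>b\<in>A. D (a * b) = a * D b + D a * b"
  show "\<forall>\<phi>\<in>Delta. point_derivation A \<phi> (\<lambda>a. a) (\<phi> \<circ> D)"
  proof
    fix \<phi> :: "'b \<Rightarrow> complex" assume \<phi>: "\<phi> \<in> Delta"
    have "\<forall>a\<in>A. \<forall>b\<in>A. \<phi> (D (a * b)) = \<phi> a * \<phi> (D b) + \<phi> b * \<phi> (D a)"
      using derivation DeltaD[OF \<phi>] by (simp add: mult.commute)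
    then show "point_derivation A \<phi> (\<lambda>a. a) (\<phi> \<circ> D)"
      using bounded_linear_functional_on_Delta_comp[OF \<phi> assms(3)]
      unfolding point_derivation_def by simp
  qed
next
  assume point_derivations: "\<forall>\<phi>\<in>Delta. point_derivation A \<phi> (\<lambda>a. a) (\<phi> \<circ> D)"
  show "\<forall>a\<in>A. \<forall>b\<in>A. D (a * b) = a * D b + D a * b"
  proof (intro ballI semisimple_Delta_eqI[OF assms(1)])
    fix a b and \<phi> :: "'b \<Rightarrow> complex"
    assume "a \<in> A" "b \<in> A" and \<phi>: "\<phi> \<in> Delta"
    then have "\<phi> (D (a * b)) = \<phi> a * \<phi> (D b) + \<phi> b * \<phi> (D a)"
      using point_derivations unfolding point_derivation_def by auto
    then show "\<phi> (D (a * b)) = \<phi> (a * D b + D a * b)"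
      using DeltaD[OF \<phi>] by (simp add: mult.commute)
  qed
qed

end
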